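(* Consider the algorithm described in the context, and suppose it does not terminate finitely. If $k\in\mathbb{N}$ satisfies $$(1-\eta)\Delta q_k(s_k,\tau_k)\ge \tfrac12\Big(-\frac{\tau_k}{\alpha_k}+\tau_kL_g+L_J\Big)\|s_k\|_2^2,$$ then $k\in\mathcal S$, i.e., iteration $k$ is successful ($x_{k+1}=x_k+s_k$).
   Context: Problem: $\min_{x\in\mathbb{R}^n} f(x)+r(x)$ subject to $c(x)=0$, where $f:\mathbb{R}^n\to\mathbb{R}$ and $c:\mathbb{R}^n\to\mathbb{R}^m$ ($m\le n$) are continuously differentiable and $r:\mathbb{R}^n\to\mathbb{R}_{\ge 0}$ is convex. Write $g(x)=\nabla f(x)$, $J(x)=\nabla c(x)^T$, and $f_k=f(x_k)$, $g_k=g(x_k)$, $c_k=c(x_k)$, $J_k=J(x_k)$, $r_k=r(x_k)$. All norms are Euclidean. Merit function: $\Phi_\tau(x)=\tau(f(x)+r(x))+\|c(x)\|_2$. Algorithm: inputs $x_0$, $\alpha_0>0$, $\tau_{-1}>0$; constants $\kappa_v>0$, $\sigma_c,\epsilon_\tau,\xi,\eta\in(0,1)$, $\sigma_u\in(0,1/2]$, $\bar\sigma_u:=\sigma_u+\tfrac12$. For $k=0,1,\dots$: 1. If $J_k^Tc_k\ne0$, compute $v_k$ with $v_k\in\mathrm{Range}(J_k^T)$, $\|v_k\|_2\le\kappa_v\alpha_k\|J_k^Tc_k\|_2$, $\|c_k+J_kv_k\|_2\le\|c_k+J_kv_k^c\|_2$, where $v_k^c=-\beta_k^cJ_k^Tc_k$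 with $\beta_k^c$ minimizing $\tfrac12\|c_k-\beta J_kJ_k^Tc_k\|_2^2$ over $0\le\beta\le\kappa_v\alpha_k$. Otherwise set $v_k=0$, and if $c_k\ne0$ terminate. 2. Let $u_k$ be the unique minimizer of $g_k^Tu+\tfrac1{2\alpha_k}\|u\|_2^2+r(x_k+v_k+u)$ subject to $J_ku=0$; set $s_k=v_k+u_k$. If $s_k=0$, terminate. 3. Let $D_k:=g_k^Ts_k+\bar\sigma_u\|s_k\|_2^2/\alpha_k+r(x_k+s_k)-r_k$; $\tau_{k,\mathrm{trial}}=\infty$ if $D_k\le0$, else $\tau_{k,\mathrm{trial}}=(1-\sigma_c)(\|c_k\|_2-\|c_k+J_kv_k\|_2)/D_k$. Set $\tau_k=\tau_{k-1}$ if $\tau_{k-1}\le\tau_{k,\mathrm{trial}}$, else $\tau_k=\min\{(1-\epsilon_\tau)\tau_{k-1},\tau_{k,\mathrm{trial}}\}$. 4. With $\Delta q_k(s,\tau):=-\tau(g_k^Ts+\tfrac1{2\alpha_k}\|s\|_2^2+r(x_k+s)-r_k)+\|c_k\|_2-\|c_k+J_ks\|_2$: if $\Phi_{\tau_k}(x_k+s_k)\le\Phi_{\tau_k}(x_k)-\eta\Delta q_k(s_k,\tau_k)$ set $x_{k+1}=x_k+s_k$, $\alpha_{k+1}=\alpha_k$ (iteration $k$ is then called successful, and $\mathcal S$ denotes the set of successful iterations); else $x_{k+1}=x_k$, $\alpha_{k+1}=\xi\alpha_k$. Standing assumption: there is an open convex set $\mathcal X$ containing all iterates $x_k$ and trial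 points $x_k+s_k$ such that $f$ is bounded below on $\mathcal X$, $\nabla f$ is bounded on $\mathcal X$ and Lipschitz continuous on $\mathcal X$ with constant $L_g>0$, $c$ is bounded on $\mathcal X$, $J$ is bounded on $\mathcal X$ and Lipschitz continuous on $\mathcal X$ with constant $L_J>0$, and all subgradients of $r$ at points of $\mathcal X$ are uniformly bounded in norm. *)

theory Defs
  imports "HOL-Analysis.Analysis"
begin

definition merit :: "(real^'n \<Rightarrow> real) \<Rightarrow> (real^'n \<Rightarrow> real) \<Rightarrow> (real^'n \<Rightarrow> real^'m)
    \<Rightarrow> real \<Rightarrow> real^'n \<Rightarrow> real" where
  "merit f r c \<tau> y = \<tau> * (f y + r y) + norm (c y)"

definition dq :: "(real^'n \<Rightarrow> real^'n) \<Rightarrow> (real^'n \<Rightarrow> real) \<Rightarrow> (real^'n \<Rightarrow> real^'m)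
    \<Rightarrow> (real^'n \<Rightarrow> real^'n^'m) \<Rightarrow> real \<Rightarrow> real^'n \<Rightarrow> real^'n \<Rightarrow> real \<Rightarrow> real" where
  "dq g r c J \<alpha> xk s \<tau> =
     - \<tau> * (g xk \<bullet> s + 1 / (2 * \<alpha>) * (norm s)^2 + r (xk + s) - r xk)
     + norm (c xk) - norm (c xk + J xk *v s)"

definition cauchy_obj :: "real^'n^'m \<Rightarrow> real^'m \<Rightarrow> real \<Rightarrow> real" where
  "cauchy_obj A b \<beta> = 1/2 * (norm (b - \<beta> *\<^sub>R (A *v (transpose A *v b))))^2"

definition tan_obj :: "(real^'n \<Rightarrow> real^'n) \<Rightarrow> (real^'n \<Rightarrow> real) \<Rightarrow> real
    \<Rightarrow> real^'n \<Rightarrow> real^'n \<Rightarrow> real^'n \<Rightarrow> real" where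
  "tan_obj g r \<alpha> xk vk w = g xk \<bullet> w + 1 / (2 * \<alpha>) * (norm w)^2 + r (xk + vk + w)"

definition Dk :: "(real^'n \<Rightarrow> real^'n) \<Rightarrow> (real^'n \<Rightarrow> real) \<Rightarrow> real \<Rightarrow> real
    \<Rightarrow> real^'n \<Rightarrow> real^'n \<Rightarrow> real" where
  "Dk g r \<sigma>u \<alpha> xk s = g xk \<bullet> s + (\<sigma>u + 1/2) * (norm s)^2 / \<alpha> + r (xk + s) - r xk"

text \<open>Merit parameter update of step 3 (tau_trial = infinity when D <= 0).\<close>
definition tau_update :: "real \<Rightarrow> real \<Rightarrow> real \<Rightarrow> real \<Rightarrow> real \<Rightarrow> real" where
  "tau_update \<sigma>c \<epsilon>\<tau> \<tau>prev D lin_red =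
     (if D \<le> 0 then \<tau>prev
      else (let t = (1 - \<sigma>c) * lin_red / D in
            if \<tau>prev \<le> t then \<tau>prev else min ((1 - \<epsilon>\<tau>) * \<tau>prev) t))"

definition subgrad :: "(real^'n \<Rightarrow> real) \<Rightarrow> real^'n \<Rightarrow> (real^'n) set" where
  "subgrad r y = {z. \<forall>w. r w \<ge> r y + z \<bullet> (w - y)}"

end

theory Submission
  imports Defs
begin

(*
  Along the segment from x\<^sub>k to x\<^sub>k + s\<^sub>k the Lipschitz continuity of g and J bounds the error
  of the first-order models of f and of c by (L\<^sub>g/2)\<parallel>s\<^sub>k\<parallel>\<^sup>2 and (L\<^sub>J/2)\<parallel>s\<^sub>k\<parallel>\<^sup>2. The model
  reduction \<Delta>q\<^sub>k differs from the actual merit reduction only by these errors and by the proximal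
  term \<tau>\<^sub>k\<parallel>s\<^sub>k\<parallel>\<^sup>2/(2\<alpha>\<^sub>k), so the merit reduction is at least
  \<Delta>q\<^sub>k - 1/2 (-\<tau>\<^sub>k/\<alpha>\<^sub>k + \<tau>\<^sub>k L\<^sub>g + L\<^sub>J)\<parallel>s\<^sub>k\<parallel>\<^sup>2, which by hypothesis is at least \<eta> \<Delta>q\<^sub>k.
  The only property of the iteration used is \<tau>\<^sub>k \<ge> 0, which holds because the normal step never
  increases the linearized constraint violation.
*)

lemma DERIV_le_linear_imp_increment_le:
  fixes \<phi> \<phi>' :: "real \<Rightarrow> real"
  assumes deriv: "\<And>t. 0 \<le> t \<Longrightarrow> t \<le> 1 \<Longrightarrow> (\<phi> has_real_derivative \<phi>' t) (at t)"
    and bound: "\<And>t. 0 \<le> t \<Longrightarrow> t \<le> 1 \<Longrightarrow> \<phi>' t \<le> M * t"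
  shows "\<phi> 1 - \<phi> 0 \<le> M / 2"
proof -
  let ?h = "\<lambda>t. \<phi> t - M / 2 * t\<^sup>2"
  have "?h 1 \<le> ?h 0"
  proof (rule DERIV_nonpos_imp_nonincreasing[where f = ?h])
    fix t :: real assume t: "0 \<le> t" "t \<le> 1"
    have "(?h has_real_derivative (\<phi>' t - M * t)) (at t)"
      using deriv[OF t] by (auto intro!: derivative_eq_intros)
    then show "\<exists>y. DERIV ?h t :> y \<and> y \<le> 0" using bound[OF t] by auto
  qed simp
  then show ?thesis by simp
qed

lemma linearization_error_le:
  fixes c :: "'a::real_normed_vector \<Rightarrow> 'b::real_inner" and D :: "'a \<Rightarrow> 'a \<Rightarrow> 'b"
  assumes deriv: "\<And>z. z \<in> X \<Longrightarrow> (c has_derivative D z) (at z)"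
    and lip: "\<And>a b h. a \<in> X \<Longrightarrow> b \<in> X \<Longrightarrow> norm (D a h - D b h) \<le> L * norm (a - b) * norm h"
    and X: "convex X" "y \<in> X" "y + s \<in> X"
  shows "norm (c (y + s) - c y - D y s) \<le> L / 2 * (norm s)\<^sup>2"
proof -
  define w where "w = c (y + s) - c y - D y s"
  define e where "e = sgn w"
  have e_w: "e \<bullet> w = norm w"
    unfolding e_def sgn_div_norm
    by (cases "w = 0") (simp_all add: inner_commute power2_norm_eq_inner[symmetric] power2_eq_square)
  have norm_e: "norm e \<le> 1"
    unfolding e_def by (simp add: norm_sgn)
  \<comment> \<open>project onto the direction of the error to reduce to a real function of t\<close>
  let ?\<phi> = "\<lambda>t. e \<bullet> c (y + t *\<^sub>R s) - t * (e \<bullet> D y s)"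
  have "?\<phi> 1 - ?\<phi> 0 \<le> L * (norm s)\<^sup>2 / 2"
  proof (rule DERIV_le_linear_imp_increment_le)
    fix t :: real assume t: "0 \<le> t" "t \<le> 1"
    have "y + t *\<^sub>R s = (1 - t) *\<^sub>R y + t *\<^sub>R (y + s)"
      by (simp add: algebra_simps)
    then have yt: "y + t *\<^sub>R s \<in> X"
      using convexD_alt[OF X t] by simp
    have lin: "linear (D (y + t *\<^sub>R s))"
      using has_derivative_linear[OF deriv[OF yt]] .
    have "((\<lambda>t. c (y + t *\<^sub>R s)) has_derivative (\<lambda>h. D (y + t *\<^sub>R s) (h *\<^sub>R s))) (at t)"
      by (rule has_derivative_compose[where f = "\<lambda>t. y + t *\<^sub>R s" and g = c, OF _ deriv[OF yt]]) (auto intro!: derivative_eq_intros)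
    then have "((\<lambda>t. e \<bullet> c (y + t *\<^sub>R s)) has_derivative
        (\<lambda>h. e \<bullet> D (y + t *\<^sub>R s) (h *\<^sub>R s))) (at t)"
      by (auto intro!: derivative_eq_intros)
    then have "((\<lambda>t. e \<bullet> c (y + t *\<^sub>R s)) has_real_derivative e \<bullet> D (y + t *\<^sub>R s) s) (at t)"
      by (rule has_derivative_imp_has_field_derivative) (simp add: linear_scale[OF lin])
    then show "(?\<phi> has_real_derivative e \<bullet> D (y + t *\<^sub>R s) s - e \<bullet> D y s) (at t)"
      by (auto intro!: derivative_eq_intros)
    have "e \<bullet> D (y + t *\<^sub>R s) s - e \<bullet> D y s = e \<bullet> (D (y + t *\<^sub>R s) s - D y s)"
      by (simp add: inner_diff_right)
    also have "\<dots> \<le> norm e * norm (D (y + t *\<^sub>R s) s - D y s)"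
      by (rule norm_cauchy_schwarz)
    also have "\<dots> \<le> norm (D (y + t *\<^sub>R s) s - D y s)"
      using norm_e by (simp add: mult_left_le_one_le)
    also have "\<dots> \<le> L * norm (t *\<^sub>R s) * norm s"
      using lip[OF yt X(2)] by simp
    also have "\<dots> = L * (norm s)\<^sup>2 * t"
      using t by (simp add: power2_eq_square)
    finally show "e \<bullet> D (y + t *\<^sub>R s) s - e \<bullet> D y s \<le> L * (norm s)\<^sup>2 * t" .
  qed
  then have "e \<bullet> w \<le> L / 2 * (norm s)\<^sup>2"
    unfolding w_def by (simp add: inner_diff_right)
  then show ?thesis
    using e_w unfolding w_def by simp
qed

lemma lipschitz_gradient_upper_bound:
  fixes f :: "'a::real_inner \<Rightarrow> real"
  assumes "\<And>z. (f has_derivative (\<lambda>h. g z \<bullet> h)) (at z)"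
    and "\<And>a b. a \<in> X \<Longrightarrow> b \<in> X \<Longrightarrow> norm (g a - g b) \<le> L * norm (a - b)"
    and "convex X" "y \<in> X" "y + s \<in> X"
  shows "f (y + s) \<le> f y + g y \<bullet> s + L / 2 * (norm s)\<^sup>2"
proof -
  have "norm (g a \<bullet> h - g b \<bullet> h) \<le> L * norm (a - b) * norm h" if "a \<in> X" "b \<in> X" for a b h
  proof -
    have "norm (g a \<bullet> h - g b \<bullet> h) \<le> norm (g a - g b) * norm h"
      using Cauchy_Schwarz_ineq2[of "g a - g b" h] by (simp add: inner_diff_left)
    also have "\<dots> \<le> L * norm (a - b) * norm h"
      using assms(2)[OF that] by (simp add: mult_right_mono)
    finally show ?thesis .
  qed
  then have "norm (f (y + s) - f y - g y \<bullet> s) \<le> L / 2 * (norm s)\<^sup>2"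
    using linearization_error_le[of X f "\<lambda>z h. g z \<bullet> h"] assms by blast
  then show ?thesis
    unfolding real_norm_def by linarith
qed

lemma lipschitz_jacobian_norm_bound:
  fixes c :: "real^'n \<Rightarrow> real^'m" and J :: "real^'n \<Rightarrow> real^'n^'m"
  assumes "\<And>z. (c has_derivative (\<lambda>h. J z *v h)) (at z)"
    and "\<And>a b. a \<in> X \<Longrightarrow> b \<in> X \<Longrightarrow> onorm (\<lambda>h. (J a - J b) *v h) \<le> L * norm (a - b)"
    and "convex X" "y \<in> X" "y + s \<in> X"
  shows "norm (c (y + s)) \<le> norm (c y + J y *v s) + L / 2 * (norm s)\<^sup>2"
proof -
  have "norm (J a *v h - J b *v h) \<le> L * norm (a - b) * norm h" if "a \<in> X" "b \<in> X" for a b h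
  proof -
    have "norm ((J a - J b) *v h) \<le> onorm (\<lambda>h. (J a - J b) *v h) * norm h"
      by (rule onorm) simp
    also have "\<dots> \<le> L * norm (a - b) * norm h"
      using assms(2)[OF that] by (simp add: mult_right_mono)
    finally show ?thesis by (simp add: matrix_vector_mult_diff_rdistrib)
  qed
  then have "norm (c (y + s) - c y - J y *v s) \<le> L / 2 * (norm s)\<^sup>2"
    using linearization_error_le[of X c "\<lambda>z h. J z *v h"] assms by blast
  moreover have "norm (c (y + s)) \<le> norm (c y + J y *v s) + norm (c (y + s) - c y - J y *v s)"
    using norm_triangle_ineq[of "c y + J y *v s" "c (y + s) - c y - J y *v s"] by simp
  ultimately show ?thesis by linarith
qed

lemma merit_actual_vs_model_reduction:
  assumes "\<tau> \<ge> 0"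
    and "f (y + s) \<le> f y + g y \<bullet> s + Lg / 2 * (norm s)\<^sup>2"
    and "norm (c (y + s)) \<le> norm (c y + J y *v s) + LJ / 2 * (norm s)\<^sup>2"
  shows "merit f r c \<tau> (y + s) - merit f r c \<tau> y + dq g r c J \<alpha> y s \<tau>
      \<le> 1/2 * (- \<tau> / \<alpha> + \<tau> * Lg + LJ) * (norm s)\<^sup>2"
proof -
  have "\<tau> * f (y + s) \<le> \<tau> * (f y + g y \<bullet> s + Lg / 2 * (norm s)\<^sup>2)"
    using assms(2,1) by (rule mult_left_mono)
  with assms(3) show ?thesis
    unfolding merit_def dq_def by (simp add: algebra_simps)
qed

lemma cauchy_minimizer_norm_le:
  fixes A :: "real^'n^'m"
  assumes "\<beta> \<in> {0..K}" "\<forall>\<beta>'\<in>{0..K}. cauchy_obj A b \<beta> \<le> cauchy_obj A b \<beta>'"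
  shows "norm (b + A *v (- (\<beta> *\<^sub>R (transpose A *v b)))) \<le> norm b"
proof -
  have "cauchy_obj A b \<beta> \<le> cauchy_obj A b 0"
    using assms by auto
  then have "(norm (b - \<beta> *\<^sub>R (A *v (transpose A *v b))))\<^sup>2 \<le> (norm b)\<^sup>2"
    unfolding cauchy_obj_def by simp
  then have "norm (b - \<beta> *\<^sub>R (A *v (transpose A *v b))) \<le> norm b"
    by (rule power2_le_imp_le) simp
  moreover have "A *v (- (\<beta> *\<^sub>R (transpose A *v b))) = - (\<beta> *\<^sub>R (A *v (transpose A *v b)))"
    by (metis matrix_vector_mult_scaleR scaleR_minus_left)
  ultimately show ?thesis by simp
qed

lemma tau_update_nonneg:
  assumes "\<tau>prev \<ge> 0" "lin_red \<ge> 0" "\<sigma>c < 1" "\<epsilon>\<tau> < 1"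
  shows "tau_update \<sigma>c \<epsilon>\<tau> \<tau>prev D lin_red \<ge> 0"
  using assms unfolding tau_update_def Let_def by (auto intro!: divide_nonneg_pos)

theorem lemma3p5:
  fixes f :: "real^'n \<Rightarrow> real" and g :: "real^'n \<Rightarrow> real^'n"
    and c :: "real^'n \<Rightarrow> real^'m" and J :: "real^'n \<Rightarrow> real^'n^'m"
    and r :: "real^'n \<Rightarrow> real"
    and x v u s :: "nat \<Rightarrow> real^'n" and \<alpha> \<tau> :: "nat \<Rightarrow> real"
    and \<tau>m1 \<kappa>v \<sigma>c \<epsilon>\<tau> \<xi> \<eta> \<sigma>u Lg LJ :: real
    and X :: "(real^'n) set" and k :: nat
  assumes dims: "CARD('m) \<le> CARD('n)"
    \<comment> \<open>problem data\<close>
    and f_deriv: "\<And>y. (f has_derivative (\<lambda>h. g y \<bullet> h)) (at y)"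
    and g_cont: "continuous_on UNIV g"
    and c_deriv: "\<And>y. (c has_derivative (\<lambda>h. J y *v h)) (at y)"
    and J_cont: "continuous_on UNIV J"
    and r_convex: "convex_on UNIV r" and r_nonneg: "\<And>y. r y \<ge> 0"
    \<comment> \<open>constants\<close>
    and alpha0: "\<alpha> 0 > 0" and taum1: "\<tau>m1 > 0" and kappa: "\<kappa>v > 0"
    and sc: "0 < \<sigma>c" "\<sigma>c < 1" and et: "0 < \<epsilon>\<tau>" "\<epsilon>\<tau> < 1"
    and xi: "0 < \<xi>" "\<xi> < 1" and eta: "0 < \<eta>" "\<eta> < 1"
    and su: "0 < \<sigma>u" "\<sigma>u \<le> 1/2"
    \<comment> \<open>step 1 (normal step), with no termination\<close>
    and step1: "\<And>i. transpose (J (x i)) *v c (x i) \<noteq> 0 \<Longrightarrow>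
        v i \<in> range (\<lambda>y. transpose (J (x i)) *v y)
        \<and> norm (v i) \<le> \<kappa>v * \<alpha> i * norm (transpose (J (x i)) *v c (x i))
        \<and> (\<exists>\<beta>\<in>{0..\<kappa>v * \<alpha> i}.
              (\<forall>\<beta>'\<in>{0..\<kappa>v * \<alpha> i}. cauchy_obj (J (x i)) (c (x i)) \<beta> \<le> cauchy_obj (J (x i)) (c (x i)) \<beta>')
            \<and> norm (c (x i) + J (x i) *v v i)
                \<le> norm (c (x i) + J (x i) *v (- (\<beta> *\<^sub>R (transpose (J (x i)) *v c (x i))))))"
    and step1': "\<And>i. transpose (J (x i)) *v c (x i) = 0 \<Longrightarrow> v i = 0 \<and> c (x i) = 0"
    \<comment> \<open>step 2 (tangential step), with no termination\<close>
    and step2_feas: "\<And>i. J (x i) *v u i = 0"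
    and step2_min: "\<And>i w. J (x i) *v w = 0 \<Longrightarrow>
        tan_obj g r (\<alpha> i) (x i) (v i) (u i) \<le> tan_obj g r (\<alpha> i) (x i) (v i) w"
    and step2_s: "\<And>i. s i = v i + u i"
    and step2_nz: "\<And>i. s i \<noteq> 0"
    \<comment> \<open>step 3 (merit parameter update); tau_(-1) is tau_m1\<close>
    and step3: "\<And>i. \<tau> i = tau_update \<sigma>c \<epsilon>\<tau> (if i = 0 then \<tau>m1 else \<tau> (i - 1))
        (Dk g r \<sigma>u (\<alpha> i) (x i) (s i))
        (norm (c (x i)) - norm (c (x i) + J (x i) *v v i))"
    \<comment> \<open>step 4 (acceptance test)\<close>
    and step4: "\<And>i. merit f r c (\<tau> i) (x i + s i)
          \<le> merit f r c (\<tau> i) (x i) - \<eta> * dq g r c J (\<alpha> i) (x i) (s i) (\<tau> i)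
        \<Longrightarrow> x (Suc i) = x i + s i \<and> \<alpha> (Suc i) = \<alpha> i"
    and step4': "\<And>i. \<not> merit f r c (\<tau> i) (x i + s i)
          \<le> merit f r c (\<tau> i) (x i) - \<eta> * dq g r c J (\<alpha> i) (x i) (s i) (\<tau> i)
        \<Longrightarrow> x (Suc i) = x i \<and> \<alpha> (Suc i) = \<xi> * \<alpha> i"
    \<comment> \<open>standing assumption\<close>
    and X_open: "open X" and X_convex: "convex X"
    and X_iter: "\<And>i. x i \<in> X" and X_trial: "\<And>i. x i + s i \<in> X"
    and f_bdd: "bdd_below (f ` X)"
    and g_bdd: "bounded (g ` X)"
    and Lg_pos: "Lg > 0"
    and g_lip: "\<And>y z. y \<in> X \<Longrightarrow> z \<in> X \<Longrightarrow> norm (g y - g z) \<le> Lg * norm (y - z)"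
    and c_bdd: "bounded (c ` X)"
    and J_bdd: "bounded (J ` X)"
    and LJ_pos: "LJ > 0"
    and J_lip: "\<And>y z. y \<in> X \<Longrightarrow> z \<in> X \<Longrightarrow>
        onorm (\<lambda>h. (J y - J z) *v h) \<le> LJ * norm (y - z)"
    and subgrad_bdd: "\<exists>B. \<forall>y\<in>X. \<forall>z\<in>subgrad r y. norm z \<le> B"
    \<comment> \<open>hypothesis of the lemma\<close>
    and hk: "(1 - \<eta>) * dq g r c J (\<alpha> k) (x k) (s k) (\<tau> k)
        \<ge> 1/2 * (- \<tau> k / \<alpha> k + \<tau> k * Lg + LJ) * (norm (s k))^2"
  shows "merit f r c (\<tau> k) (x k + s k)
          \<le> merit f r c (\<tau> k) (x k) - \<eta> * dq g r c J (\<alpha> k) (x k) (s k) (\<tau> k)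
         \<and> x (Suc k) = x k + s k"
proof -
  have lin_red_nonneg: "norm (c (x i) + J (x i) *v v i) \<le> norm (c (x i))" for i
  proof (cases "transpose (J (x i)) *v c (x i) = 0")
    case True
    then show ?thesis using step1' by simp
  next
    case False
    then show ?thesis
      using step1[OF False] cauchy_minimizer_norm_le order_trans by blast
  qed
  have tau_nonneg: "\<tau> i \<ge> 0" for i
  proof (induction i)
    case 0
    show ?case using step3[of 0] tau_update_nonneg taum1 lin_red_nonneg[of 0] sc et by simp
  next
    case (Suc i)
    show ?case using step3[of "Suc i"] tau_update_nonneg Suc lin_red_nonneg[of "Suc i"] sc et by simp
  qed
  have "merit f r c (\<tau> k) (x k + s k) - merit f r c (\<tau> k) (x k) + dq g r c J (\<alpha> k) (x k) (s k) (\<tau> k)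
      \<le> 1/2 * (- \<tau> k / \<alpha> k + \<tau> k * Lg + LJ) * (norm (s k))\<^sup>2"
    using tau_nonneg
      lipschitz_gradient_upper_bound[OF f_deriv g_lip X_convex X_iter X_trial]
      lipschitz_jacobian_norm_bound[OF c_deriv J_lip X_convex X_iter X_trial]
    by (rule merit_actual_vs_model_reduction)
  with hk have "merit f r c (\<tau> k) (x k + s k)
      \<le> merit f r c (\<tau> k) (x k) - \<eta> * dq g r c J (\<alpha> k) (x k) (s k) (\<tau> k)"
    by (simp add: algebra_simps)
  with step4 show ?thesis by blast
qed

end
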